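(* For all $0<\varepsilon<1/8$, for all sufficiently large $\ell>0$, for all $x,y\in\bar B(0,2\ell)$ with $x\neq y$ and all $\ell'$ with $\|x-y\|\le\ell'\le2\ell$, there exist $\hat x,\hat y\in\bar B(0,3\ell)\cap\mathbb Z^d$ with $\|\hat x-\hat y\|\ge\|x-y\|$ such that every element of $\mathcal G_1(x,y,\ell')$ is included in an element of $\mathcal G_1(\hat x,\hat y,\ell'+8\varepsilon\ell)$.
   Context: Fix $d\ge2$; Euclidean norm $\|\cdot\|$, inner product $\langle\cdot,\cdot\rangle$; $\bar B(x,r)$ is the closed Euclidean ball. Paths: finite sequences $(x_0,\dots,x_r)$ in $\mathbb R^d$, length $\sum\|x_i-x_{i+1}\|$. Animals: finite connected graphs $\xi=(V,E)$ with $V\subseteq\mathbb R^d$, length $\sum_{\{x,y\}\in E}\|x-y\|$; inclusion of animals is inclusion as subgraphs. $\mathcal P(x,y,\ell)$: paths from $x$ to $y$ of length $\le\ell$; $\mathcal A^*(x,y,\ell)$: animals empty or with $\|\xi\|+\mathrm d(x,V)+\mathrm d(y,V)\le\ell$. $\mathcal G$ denotes either $\mathcal P$ or $\mathcal A^*$. For $x\ne y$, $D_1(x,y)=\{z:\langle z-x,y-x\rangle\ge0,\ \langle z-y,x-y\rangle\ge0\}$ and $\mathcal G_1(x,y,\ell)=\{\xi\in\mathcal G(x,y,\ell):\xi\subseteq D_1(x,y)\}$. *)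

theory Defs
  imports "HOL-Analysis.Analysis" "HOL-Library.Sublist"
begin

type_synonym 'a path_seq = "'a list"

definition path_len :: "'a::real_normed_vector list \<Rightarrow> real" where
  "path_len xs = sum_list (map (\<lambda>(a,b). norm (a - b)) (zip xs (tl xs)))"

definition Paths :: "'a::real_normed_vector \<Rightarrow> 'a \<Rightarrow> real \<Rightarrow> 'a list set" where
  "Paths x y l = {xs. xs \<noteq> [] \<and> hd xs = x \<and> last xs = y \<and> path_len xs \<le> l}"

text \<open>Animals: finite connected graphs (V,E) with vertices in the space; the undirected edge
  set is encoded as a symmetric irreflexive relation E \<subseteq> V \<times> V.\<close>
type_synonym 'a animal = "'a set \<times> ('a \<times> 'a) set"

definition is_animal :: "'a animal \<Rightarrow> bool" where
  "is_animal \<xi> \<longleftrightarrow> (case \<xi> of (V, E) \<Rightarrow>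
      finite V \<and> E \<subseteq> V \<times> V \<and> sym E \<and> irrefl E \<and> (\<forall>u\<in>V. \<forall>v\<in>V. (u, v) \<in> E\<^sup>*))"

text \<open>Each undirected edge {x,y} appears as (x,y) and (y,x), hence the factor 1/2.\<close>
definition animal_len :: "('a::real_normed_vector) animal \<Rightarrow> real" where
  "animal_len \<xi> = (1/2) * (\<Sum>(a,b)\<in>snd \<xi>. norm (a - b))"

definition animal_sub :: "'a animal \<Rightarrow> 'a animal \<Rightarrow> bool" where
  "animal_sub \<xi> \<eta> \<longleftrightarrow> fst \<xi> \<subseteq> fst \<eta> \<and> snd \<xi> \<subseteq> snd \<eta>"

definition AnimalsStar :: "'a::real_normed_vector \<Rightarrow> 'a \<Rightarrow> real \<Rightarrow> 'a animal set" where
  "AnimalsStar x y l = {\<xi>. is_animal \<xi> \<and>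
      (fst \<xi> = {} \<or> animal_len \<xi> + infdist x (fst \<xi>) + infdist y (fst \<xi>) \<le> l)}"

definition D1 :: "'a::real_inner \<Rightarrow> 'a \<Rightarrow> 'a set" where
  "D1 x y = {z. inner (z - x) (y - x) \<ge> 0 \<and> inner (z - y) (x - y) \<ge> 0}"

definition Paths1 :: "'a::real_inner \<Rightarrow> 'a \<Rightarrow> real \<Rightarrow> 'a list set" where
  "Paths1 x y l = {xs \<in> Paths x y l. set xs \<subseteq> D1 x y}"

definition AnimalsStar1 :: "'a::real_inner \<Rightarrow> 'a \<Rightarrow> real \<Rightarrow> 'a animal set" where
  "AnimalsStar1 x y l = {\<xi> \<in> AnimalsStar x y l. fst \<xi> \<subseteq> D1 x y}"

definition lattice_pt :: "real^'n \<Rightarrow> bool" where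
  "lattice_pt z \<longleftrightarrow> (\<forall>i. z $ i \<in> \<int>)"

end

(*
  Push x and y apart along the line through them, each by t = \<epsilon>l, and round the two points to
  the lattice, with an error of at most c = d in norm. Moving the endpoints outwards gains a margin
  of about 2t(t - c) in both inner products defining the slab D1, while the rounding errors cost
  at most about 2c l on points within distance l of x and y. Hence, once t^2 dominates c l,
  i.e. for l large compared to d/\<epsilon>^2, the new slab contains every point of D1(x, y) near x and y,
  in particular every vertex of a path or animal of length at most l' \<le> 2l. Prepending and
  appending the new endpoints to a path, or joining them by one edge each to the vertices of an
  animal nearest to x and y, then costs at most 2(t + c) \<le> 8\<epsilon>l.
*)

theory Submission
  imports Defs "HOL-Library.Transitive_Closure_Table"
begin

lemma D1_commute: "D1 y x = D1 x y"
  unfolding D1_def by auto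

lemma left_mem_D1: "x \<in> D1 x y"
  and right_mem_D1: "y \<in> D1 x y"
  by (simp_all add: D1_def)

lemma sgn_diff_commute: "sgn (x - y) = - sgn (y - x)"
  for x y :: "'a::real_normed_vector"
  by (metis minus_diff_eq sgn_minus)

locale outward_extension =
  fixes x y x' y' :: "'a::real_inner" and t c :: real
  assumes neq: "x \<noteq> y"
    and near_x: "dist x' (x - t *\<^sub>R sgn (y - x)) \<le> c"
    and near_y: "dist y' (y + t *\<^sub>R sgn (y - x)) \<le> c"
    and c_le_t: "c \<le> t"
begin

lemma reverse: "outward_extension y x y' x' t c"
  using neq near_x near_y c_le_t sgn_diff_commute[of x y] by unfold_locales simp_all

lemma c_nonneg: "0 \<le> c"
  using near_x zero_le_dist order_trans by blast

lemma decompose: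
  obtains u e1 e2 where "norm u = 1" "y - x = dist x y *\<^sub>R u"
    "x' = x - t *\<^sub>R u + e1" "y' = y + t *\<^sub>R u + e2" "norm e1 \<le> c" "norm e2 \<le> c"
    "y' - x' = (dist x y + t + t) *\<^sub>R u + (e2 - e1)"
proof -
  define u where "u = sgn (y - x)"
  define e1 where "e1 = x' - (x - t *\<^sub>R u)"
  define e2 where "e2 = y' - (y + t *\<^sub>R u)"
  have yx: "y - x = dist x y *\<^sub>R u"
    using neq by (simp add: u_def dist_norm norm_minus_commute sgn_div_norm)
  have "y' - x' = (y - x) + t *\<^sub>R u + t *\<^sub>R u + (e2 - e1)"
    by (simp add: e1_def e2_def algebra_simps)
  then have "y' - x' = (dist x y + t + t) *\<^sub>R u + (e2 - e1)"
    by (simp only: yx scaleR_add_left)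
  moreover have "norm u = 1"
    using neq by (simp add: u_def norm_sgn)
  moreover have "norm e1 \<le> c" "norm e2 \<le> c"
    using near_x near_y by (simp_all add: e1_def e2_def u_def dist_norm)
  ultimately show thesis
    using that[of u e1 e2] yx by (simp add: e1_def e2_def)
qed

lemma dist_le: "dist x x' \<le> t + c"
proof -
  obtain u e1 where "norm u = 1" "x' = x - t *\<^sub>R u + e1" "norm e1 \<le> c"
    using decompose by metis
  then have "norm (x - x') \<le> norm (t *\<^sub>R u) + norm e1"
    using norm_triangle_ineq4[of "t *\<^sub>R u" e1] by simp
  then show ?thesis
    using c_nonneg c_le_t \<open>norm u = 1\<close> \<open>norm e1 \<le> c\<close> by (simp add: dist_norm)
qed

lemma dist_le_dist: "dist x y \<le> dist x' y'"
proof -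
  obtain u e1 e2 where u: "norm u = 1" and e1: "norm e1 \<le> c" and e2: "norm e2 \<le> c"
    and diff: "y' - x' = (dist x y + t + t) *\<^sub>R u + (e2 - e1)"
    using decompose by metis
  have "- (2 * c) \<le> inner (e2 - e1) u"
    using norm_cauchy_schwarz[of "e1 - e2" u] norm_triangle_ineq4[of e1 e2] u e1 e2
    by (simp add: inner_diff_left)
  then have "dist x y \<le> inner (y' - x') u"
    using c_le_t u by (simp add: diff inner_add_left dot_square_norm)
  also have "\<dots> \<le> dist x' y'"
    using norm_cauchy_schwarz[of "y' - x'" u] u by (simp add: dist_norm norm_minus_commute)
  finally show ?thesis .
qed

lemma not_in_D1: "c < t \<Longrightarrow> x' \<notin> D1 x y"
proof
  obtain u e1 where u: "norm u = 1" and yx: "y - x = dist x y *\<^sub>R u"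
    and x': "x' = x - t *\<^sub>R u + e1" and e1: "norm e1 \<le> c"
    using decompose by metis
  assume "c < t" "x' \<in> D1 x y"
  have "inner e1 u \<le> c"
    using norm_cauchy_schwarz[of e1 u] u e1 by simp
  then have "inner (x' - x) (y - x) < 0"
    using \<open>c < t\<close> neq u by (simp add: x' yx inner_add_left inner_diff_left dot_square_norm mult_pos_neg)
  with \<open>x' \<in> D1 x y\<close> show False
    by (simp add: D1_def)
qed

text \<open>Along the direction u of y - x, the vector y' - x' has length at least 2t and
  z - x' has component at least t - c; the errors e1, e2 only cost 2c|z - x'|.\<close>

lemma inner_nonneg:
  assumes z: "z \<in> D1 x y" and R: "dist x z \<le> R" and big: "c * (R + t + c) \<le> t * (t - c)"
  shows "0 \<le> inner (z - x') (y' - x')"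
proof -
  obtain u e1 e2 where u: "norm u = 1" and yx: "y - x = dist x y *\<^sub>R u"
    and x': "x' = x - t *\<^sub>R u + e1" and e1: "norm e1 \<le> c" and e2: "norm e2 \<le> c"
    and diff: "y' - x' = (dist x y + t + t) *\<^sub>R u + (e2 - e1)"
    using decompose by metis
  have "0 \<le> dist x y * inner (z - x) u"
    using z by (simp add: D1_def yx)
  then have "0 \<le> inner (z - x) u"
    using neq by (simp add: zero_le_mult_iff)
  moreover have "inner e1 u \<le> c"
    using norm_cauchy_schwarz[of e1 u] u e1 by simp
  ultimately have "t - c \<le> inner (z - x') u"
    using u by (simp add: x' algebra_simps inner_diff_left inner_add_left dot_square_norm)
  then have along: "2 * (t * (t - c)) \<le> (dist x y + t + t) * inner (z - x') u"
    using c_le_t c_nonneg mult_mono[of "t + t" "dist x y + t + t" "t - c" "inner (z - x') u"]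
    by (simp add: algebra_simps)
  have "norm (z - x') \<le> R + t + c"
    using dist_triangle[of z x' x] R dist_le by (simp add: dist_norm norm_minus_commute)
  moreover have "norm (e2 - e1) \<le> 2 * c"
    using norm_triangle_ineq4[of e2 e1] e1 e2 by simp
  ultimately have "\<bar>inner (z - x') (e2 - e1)\<bar> \<le> (R + t + c) * (2 * c)"
    using Cauchy_Schwarz_ineq2[of "z - x'" "e2 - e1"] c_nonneg
    by (meson mult_mono norm_ge_zero order_trans)
  then have across: "- (2 * (c * (R + t + c))) \<le> inner (z - x') (e2 - e1)"
    by (simp add: algebra_simps)
  have "inner (z - x') (y' - x') = (dist x y + t + t) * inner (z - x') u + inner (z - x') (e2 - e1)"
    by (simp add: diff inner_add_right)
  then show ?thesis
    using along across big by linarith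
qed

lemma mem_D1_extended:
  assumes "z \<in> D1 x y" "dist x z \<le> R" "dist y z \<le> R" "c * (R + t + c) \<le> t * (t - c)"
  shows "z \<in> D1 x' y'"
  using inner_nonneg[of z R] outward_extension.inner_nonneg[OF reverse, of z R] assms
  by (simp add: D1_def D1_commute inner_commute)

end

lemma path_len_Nil [simp]: "path_len [] = 0"
  and path_len_singleton [simp]: "path_len [a] = 0"
  and path_len_Cons_Cons [simp]: "path_len (a # b # xs) = dist a b + path_len (b # xs)"
  by (simp_all add: path_len_def dist_norm)

lemma path_len_nonneg: "0 \<le> path_len xs"
  by (induction xs rule: induct_list012) auto

lemma path_len_snoc: "xs \<noteq> [] \<Longrightarrow> path_len (xs @ [b]) = path_len xs + dist (last xs) b"
  by (induction xs rule: induct_list012) auto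

lemma dist_hd_le_path_len: "z \<in> set xs \<Longrightarrow> dist (hd xs) z \<le> path_len xs"
proof (induction xs rule: induct_list012)
  case (3 a b xs)
  then show ?case
    using dist_triangle[of a z b] path_len_nonneg[of "b # xs"] by auto
qed auto

lemma dist_last_le_path_len: "z \<in> set xs \<Longrightarrow> dist z (last xs) \<le> path_len xs"
proof (induction xs arbitrary: z rule: induct_list012)
  case (3 a b xs)
  have IH: "dist w (last (b # xs)) \<le> path_len (b # xs)" if "w \<in> set (b # xs)" for w
    using 3 that by blast
  have "last (a # b # xs) = last (b # xs)"
    by simp
  moreover have "dist z (last (b # xs)) \<le> dist a b + path_len (b # xs)"
  proof (cases "z = a")
    case True
    then show ?thesis
      using IH[of b] dist_triangle[of a "last (b # xs)" b] by simp
  next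
    case False
    then have "z \<in> set (b # xs)"
      using 3 by simp
    then show ?thesis
      using IH[of z] zero_le_dist[of a b] by linarith
  qed
  ultimately show ?case
    by (simp only: path_len_Cons_Cons)
qed auto

lemma Paths_dist_le:
  assumes "p \<in> Paths x y l" "z \<in> set p"
  shows "dist x z \<le> l" "dist y z \<le> l"
  using assms dist_hd_le_path_len[of z p] dist_last_le_path_len[of z p]
  by (auto simp: Paths_def dist_commute)

lemma Paths_extend:
  assumes "p \<in> Paths x y l" "l + dist x x' + dist y y' \<le> m"
  shows "x' # p @ [y'] \<in> Paths x' y' m"
proof -
  obtain b bs where p: "p = b # bs" and "b = x" "last p = y" "path_len p \<le> l"
    using assms(1) by (cases p) (auto simp: Paths_def)
  then have "path_len (x' # p @ [y']) = dist x' x + path_len p + dist y y'"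
    using path_len_snoc[of p y'] by (simp add: p)
  then show ?thesis
    using assms \<open>path_len p \<le> l\<close> by (simp add: Paths_def dist_commute)
qed

lemma is_animalD:
  assumes "is_animal (V, E)"
  shows "finite V" "E \<subseteq> V \<times> V" "sym E" "irrefl E"
    "\<And>u w. u \<in> V \<Longrightarrow> w \<in> V \<Longrightarrow> (u, w) \<in> E\<^sup>*"
  using assms unfolding is_animal_def prod.case by blast+

fun walk_edges :: "'a \<Rightarrow> 'a list \<Rightarrow> ('a \<times> 'a) set" where
  "walk_edges a [] = {}"
| "walk_edges a (b # xs) = {(a, b), (b, a)} \<union> walk_edges b xs"

lemma walk_edges_subset: "walk_edges a xs \<subseteq> set (a # xs) \<times> set (a # xs)"
  by (induction xs arbitrary: a) auto

lemma finite_walk_edges: "finite (walk_edges a xs)"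
  by (induction xs arbitrary: a) auto

lemma sum_walk_edges_ge:
  fixes a b :: "'a::real_normed_vector"
  assumes "rtrancl_path (\<lambda>p q. (p, q) \<in> E) a xs b" "distinct (a # xs)" "sym E"
  shows "walk_edges a xs \<subseteq> E \<and> 2 * dist a b \<le> (\<Sum>(p, q)\<in>walk_edges a xs. norm (p - q))"
  using assms
proof (induction rule: rtrancl_path.induct)
  case (step a b xs c)
  have disjoint: "{(a, b), (b, a)} \<inter> walk_edges b xs = {}"
    using walk_edges_subset[of b xs] step.prems(1) by auto
  have "(\<Sum>(p, q)\<in>walk_edges a (b # xs). norm (p - q))
      = (\<Sum>(p, q)\<in>{(a, b), (b, a)}. norm (p - q)) + (\<Sum>(p, q)\<in>walk_edges b xs. norm (p - q))"
    unfolding walk_edges.simps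
    by (rule sum.union_disjoint) (use disjoint in \<open>auto simp: finite_walk_edges\<close>)
  also have "(\<Sum>(p, q)\<in>{(a, b), (b, a)}. norm (p - q)) = 2 * dist a b"
    using step.prems(1) by (auto simp: dist_norm norm_minus_commute)
  finally show ?case
    using step dist_triangle[of a c b] by (auto dest: symD)
qed simp

lemma animal_dist_le_len:
  assumes "is_animal (V, E)" "u \<in> V" "v \<in> V"
  shows "dist u v \<le> animal_len (V, E)"
proof -
  have "finite E" "sym E" "(u, v) \<in> E\<^sup>*"
    using is_animalD[OF assms(1)] assms(2,3) finite_subset by blast+
  have "(\<lambda>p q. (p, q) \<in> E)\<^sup>*\<^sup>* u v"
    using \<open>(u, v) \<in> E\<^sup>*\<close> by (simp add: rtranclp_rtrancl_eq)
  then obtain xs where "rtrancl_path (\<lambda>p q. (p, q) \<in> E) u xs v"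
    by (auto simp: rtranclp_eq_rtrancl_path)
  then obtain xs' where walk: "rtrancl_path (\<lambda>p q. (p, q) \<in> E) u xs' v" "distinct (u # xs')"
    by (rule rtrancl_path_distinct)
  have "(\<Sum>(p, q)\<in>walk_edges u xs'. norm (p - q)) \<le> (\<Sum>(p, q)\<in>E. norm (p - q))"
    using sum_walk_edges_ge[OF walk \<open>sym E\<close>] \<open>finite E\<close> by (intro sum_mono2) auto
  then show ?thesis
    using sum_walk_edges_ge[OF walk \<open>sym E\<close>] by (simp add: animal_len_def)
qed

lemma AnimalsStar_commute: "AnimalsStar y x l = AnimalsStar x y l"
  unfolding AnimalsStar_def
  by (simp only: add.assoc add.commute[of "infdist x _"] add.left_commute[of "infdist x _"])

lemma infdist_attained_finite:
  fixes A :: "'a::metric_space set"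
  assumes "finite A" "A \<noteq> {}"
  obtains a where "a \<in> A" "infdist x A = dist x a"
proof -
  have "infdist x A = Min (dist x ` A)"
    using assms by (simp add: infdist_notempty cInf_eq_Min)
  moreover have "Min (dist x ` A) \<in> dist x ` A"
    using assms by (intro Min_in) auto
  ultimately show ?thesis
    using that by auto
qed

lemma AnimalsStar_dist_le:
  assumes "\<xi> \<in> AnimalsStar x y l" "v \<in> fst \<xi>"
  shows "dist x v \<le> l"
proof -
  obtain V E where \<xi>: "\<xi> = (V, E)"
    by (cases \<xi>)
  have an: "is_animal (V, E)" and "v \<in> V"
    and "V = {} \<or> animal_len (V, E) + infdist x V + infdist y V \<le> l"
    using assms by (simp_all add: AnimalsStar_def \<xi>)
  then have len: "animal_len (V, E) + infdist x V + infdist y V \<le> l"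
    by blast
  obtain v0 where "v0 \<in> V" "infdist x V = dist x v0"
    using infdist_attained_finite[OF is_animalD(1)[OF an]] \<open>v \<in> V\<close> by blast
  moreover have "dist v0 v \<le> animal_len (V, E)"
    using animal_dist_le_len[OF an \<open>v0 \<in> V\<close> \<open>v \<in> V\<close>] .
  ultimately show ?thesis
    using dist_triangle[of x v v0] dist_commute[of v v0] len infdist_nonneg[of y V] by linarith
qed

lemma is_animal_add_leaf:
  assumes an: "is_animal (V, E)" and "v \<in> V" "a \<notin> V"
  shows "is_animal (insert a V, E \<union> {(a, v), (v, a)})"
proof -
  let ?E = "E \<union> {(a, v), (v, a)}"
  note animal = is_animalD[OF an]
  have "E\<^sup>* \<subseteq> ?E\<^sup>*"
    by (rule rtrancl_mono) auto
  then have to_v: "(u, v) \<in> ?E\<^sup>* \<and> (v, u) \<in> ?E\<^sup>*" if "u \<in> insert a V" for u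
    using that animal(5) \<open>v \<in> V\<close> by blast
  have "\<forall>u\<in>insert a V. \<forall>w\<in>insert a V. (u, w) \<in> ?E\<^sup>*"
    using to_v rtrancl_trans by metis
  moreover have "sym ?E"
    using animal(3) by (auto simp: sym_def)
  moreover have "irrefl ?E"
    using animal(4) \<open>v \<in> V\<close> \<open>a \<notin> V\<close> by (auto simp: irrefl_def)
  ultimately show ?thesis
    using animal(1,2) \<open>v \<in> V\<close> by (auto simp: is_animal_def)
qed

lemma animal_len_add_leaf:
  assumes "is_animal (V, E)" "v \<in> V" "a \<notin> V"
  shows "animal_len (insert a V, E \<union> {(a, v), (v, a)}) = animal_len (V, E) + dist a v"
proof -
  let ?f = "\<lambda>(p, q). norm (p - q)"
  have "finite E" "E \<inter> {(a, v), (v, a)} = {}" "a \<noteq> v"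
    using is_animalD(1,2)[OF assms(1)] assms(2,3) finite_subset by blast+
  then have "sum ?f (E \<union> {(a, v), (v, a)}) = sum ?f E + sum ?f {(a, v), (v, a)}"
    by (intro sum.union_disjoint) auto
  moreover have "sum ?f {(a, v), (v, a)} = 2 * dist a v"
    using \<open>a \<noteq> v\<close> by (simp add: dist_norm norm_minus_commute)
  ultimately show ?thesis
    by (simp add: animal_len_def)
qed

lemma AnimalsStar_move_start:
  assumes "\<xi> \<in> AnimalsStar x y l" "l + dist x x' \<le> m"
  shows "\<xi> \<in> AnimalsStar x' y m"
  using assms infdist_triangle[of x' "fst \<xi>" x] by (auto simp: AnimalsStar_def dist_commute)

lemma AnimalsStar_add_leaf_start:
  assumes "\<xi> \<in> AnimalsStar x y l" "fst \<xi> \<noteq> {}" "x' \<notin> fst \<xi>"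
  obtains \<eta> where "\<eta> \<in> AnimalsStar x' y (l + dist x x')" "animal_sub \<xi> \<eta>"
    "fst \<eta> = insert x' (fst \<xi>)"
proof -
  obtain V E where \<xi>: "\<xi> = (V, E)"
    by (cases \<xi>)
  have an: "is_animal (V, E)" and "V \<noteq> {}" "x' \<notin> V"
    and "V = {} \<or> animal_len (V, E) + infdist x V + infdist y V \<le> l"
    using assms by (simp_all add: AnimalsStar_def \<xi>)
  then have len: "animal_len (V, E) + infdist x V + infdist y V \<le> l"
    by blast
  obtain v0 where "v0 \<in> V" "infdist x V = dist x v0"
    using infdist_attained_finite[OF is_animalD(1)[OF an] \<open>V \<noteq> {}\<close>] by blast
  define \<eta> where "\<eta> = (insert x' V, E \<union> {(x', v0), (v0, x')})"
  have "animal_len \<eta> = animal_len (V, E) + dist x' v0"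
    unfolding \<eta>_def using an \<open>v0 \<in> V\<close> \<open>x' \<notin> V\<close> by (rule animal_len_add_leaf)
  moreover have "dist x' v0 \<le> dist x x' + infdist x V"
    using dist_triangle[of x' v0 x] \<open>infdist x V = dist x v0\<close> by (simp add: dist_commute)
  moreover have "infdist y (insert x' V) \<le> infdist y V"
    using \<open>V \<noteq> {}\<close> by (intro infdist_mono) auto
  ultimately have "animal_len \<eta> + infdist x' (fst \<eta>) + infdist y (fst \<eta>) \<le> l + dist x x'"
    using len by (simp add: \<eta>_def)
  moreover have "is_animal \<eta>"
    unfolding \<eta>_def using an \<open>v0 \<in> V\<close> \<open>x' \<notin> V\<close> by (rule is_animal_add_leaf)
  ultimately show ?thesis
    using that[of \<eta>] by (auto simp: AnimalsStar_def animal_sub_def \<eta>_def \<xi>)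
qed

lemma AnimalsStar_attach_endpoints:
  assumes "\<xi> \<in> AnimalsStar x y l" "x' \<notin> fst \<xi>" "y' \<notin> fst \<xi>" "l + dist x x' + dist y y' \<le> m"
  obtains \<eta> where "\<eta> \<in> AnimalsStar x' y' m" "animal_sub \<xi> \<eta>" "fst \<eta> \<subseteq> insert x' (insert y' (fst \<xi>))"
proof (cases "fst \<xi> = {}")
  case True
  then show ?thesis
    using assms(1) that[of \<xi>] by (auto simp: AnimalsStar_def animal_sub_def)
next
  case False
  obtain \<eta> where \<eta>: "\<eta> \<in> AnimalsStar y x' (l + dist x x')" "animal_sub \<xi> \<eta>"
    "fst \<eta> = insert x' (fst \<xi>)"
    using AnimalsStar_add_leaf_start[OF assms(1) False assms(2)] AnimalsStar_commute by metis
  show ?thesis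
  proof (cases "y' \<in> fst \<eta>")
    case True
    have "\<eta> \<in> AnimalsStar y' x' m"
      using AnimalsStar_move_start[OF \<eta>(1), of y' m] assms(4) by (simp add: dist_commute)
    then have "\<eta> \<in> AnimalsStar x' y' m"
      by (simp add: AnimalsStar_commute)
    moreover have "fst \<eta> \<subseteq> insert x' (insert y' (fst \<xi>))"
      using \<eta>(3) by blast
    ultimately show ?thesis
      using that \<eta>(2) by blast
  next
    case False
    obtain \<zeta> where \<zeta>: "\<zeta> \<in> AnimalsStar y' x' (l + dist x x' + dist y y')" "animal_sub \<eta> \<zeta>"
      "fst \<zeta> = insert y' (fst \<eta>)"
      using AnimalsStar_add_leaf_start[OF \<eta>(1) _ False] \<eta>(3) by blast
    have "\<zeta> \<in> AnimalsStar x' y' m"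
      using AnimalsStar_move_start[OF \<zeta>(1), of y' m] assms(4) AnimalsStar_commute by auto
    moreover have "animal_sub \<xi> \<zeta>"
      using \<eta>(2) \<zeta>(2) by (auto simp: animal_sub_def)
    moreover have "fst \<zeta> \<subseteq> insert x' (insert y' (fst \<xi>))"
      using \<zeta>(3) \<eta>(3) by blast
    ultimately show ?thesis
      using that by blast
  qed
qed

context outward_extension
begin

lemma Paths1_extend:
  assumes "p \<in> Paths1 x y l" "c * (l + t + c) \<le> t * (t - c)" "l + 2 * (t + c) \<le> m"
  shows "x' # p @ [y'] \<in> Paths1 x' y' m"
proof -
  have p: "p \<in> Paths x y l" "set p \<subseteq> D1 x y"
    using assms(1) by (simp_all add: Paths1_def)
  have "x' # p @ [y'] \<in> Paths x' y' m"
    using Paths_extend[OF p(1)] dist_le outward_extension.dist_le[OF reverse] assms(3) by simp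
  moreover have "set p \<subseteq> D1 x' y'"
    using p mem_D1_extended Paths_dist_le assms(2) by blast
  ultimately show ?thesis
    by (simp add: Paths1_def left_mem_D1 right_mem_D1)
qed

lemma AnimalsStar1_extend:
  assumes "\<xi> \<in> AnimalsStar1 x y l" "c < t" "c * (l + t + c) \<le> t * (t - c)" "l + 2 * (t + c) \<le> m"
  obtains \<eta> where "\<eta> \<in> AnimalsStar1 x' y' m" "animal_sub \<xi> \<eta>"
proof -
  have \<xi>: "\<xi> \<in> AnimalsStar x y l" "fst \<xi> \<subseteq> D1 x y"
    using assms(1) by (simp_all add: AnimalsStar1_def)
  have "x' \<notin> fst \<xi>" "y' \<notin> fst \<xi>"
    using \<xi>(2) not_in_D1[OF assms(2)] outward_extension.not_in_D1[OF reverse assms(2)]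
    by (auto simp: D1_commute)
  moreover have "l + dist x x' + dist y y' \<le> m"
    using dist_le outward_extension.dist_le[OF reverse] assms(4) by simp
  ultimately obtain \<eta> where \<eta>: "\<eta> \<in> AnimalsStar x' y' m" "animal_sub \<xi> \<eta>"
    "fst \<eta> \<subseteq> insert x' (insert y' (fst \<xi>))"
    using AnimalsStar_attach_endpoints[OF \<xi>(1)] by blast
  have "v \<in> D1 x' y'" if "v \<in> fst \<xi>" for v
    using mem_D1_extended[of v l] \<xi> that assms(3) AnimalsStar_dist_le[of \<xi> x y l v]
      AnimalsStar_dist_le[of \<xi> y x l v] by (auto simp: AnimalsStar_commute)
  then have "fst \<eta> \<subseteq> D1 x' y'"
    using \<eta>(3) left_mem_D1 right_mem_D1 by blast
  then show ?thesis
    using that \<eta>(1,2) by (simp add: AnimalsStar1_def)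
qed

end

definition round_vec :: "real^'n \<Rightarrow> real^'n" where
  "round_vec z = (\<chi> i. of_int \<lfloor>z $ i\<rfloor>)"

lemma lattice_pt_round_vec: "lattice_pt (round_vec z)"
  by (simp add: lattice_pt_def round_vec_def)

lemma dist_round_vec_le: "dist (round_vec z) z \<le> real CARD('n)"
  for z :: "real^'n"
proof -
  have "dist (round_vec z) z \<le> (\<Sum>i\<in>UNIV. \<bar>(round_vec z - z) $ i\<bar>)"
    unfolding dist_norm by (rule norm_le_l1_cart)
  also have "\<dots> \<le> (\<Sum>i\<in>(UNIV::'n set). 1)"
    by (intro sum_mono) (simp add: round_vec_def floor_le_iff abs_le_iff, linarith)
  finally show ?thesis
    by simp
qed

definition outer_lattice_pt :: "real^'n \<Rightarrow> real^'n \<Rightarrow> real \<Rightarrow> real^'n" where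
  "outer_lattice_pt x y t = round_vec (x - t *\<^sub>R sgn (y - x))"

lemma outward_extension_outer_lattice_pt:
  fixes x y :: "real^'n"
  assumes "x \<noteq> y" "real CARD('n) \<le> t"
  shows "outward_extension x y (outer_lattice_pt x y t) (outer_lattice_pt y x t) t (real CARD('n))"
  using assms dist_round_vec_le sgn_diff_commute[of x y]
  by unfold_locales (simp_all add: outer_lattice_pt_def)

text \<open>For t = \<epsilon>l \<ge> 4c/\<epsilon> + 4c one has t(t - c) \<ge> t^2/2 \<ge> 2cl + 2ct \<ge> c(2l + t + c).\<close>

lemma eventually_large_scale:
  fixes c \<epsilon> :: real
  assumes "0 \<le> c" "0 < \<epsilon>" "\<epsilon> \<le> 1/2"
  shows "\<forall>\<^sub>F l in at_top. 0 < l \<and> c < \<epsilon> * l \<and> \<epsilon> * l + c \<le> l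
    \<and> c * (2 * l + \<epsilon> * l + c) \<le> \<epsilon> * l * (\<epsilon> * l - c)"
  using eventually_ge_at_top[of "(4 * c / \<epsilon> + 4 * c + 1) / \<epsilon>"]
proof (rule eventually_mono)
  fix l
  assume "(4 * c / \<epsilon> + 4 * c + 1) / \<epsilon> \<le> l"
  moreover define t where "t = \<epsilon> * l"
  ultimately have t: "4 * c / \<epsilon> + 4 * c + 1 \<le> t"
    using assms by (simp add: divide_le_eq mult.commute)
  have "0 \<le> c / \<epsilon>"
    using assms by simp
  then have "0 < t" "c < t"
    using t assms(1) by linarith+
  then have "0 < l"
    using assms by (simp add: t_def zero_less_mult_iff)
  have "t \<le> l / 2"
    using assms \<open>0 < l\<close> by (simp add: t_def)
  have "4 * c * l = t * (4 * c / \<epsilon>)"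
    using assms by (simp add: t_def)
  moreover have "t * (4 * c / \<epsilon> + 4 * c) \<le> t * t"
    using t \<open>0 < t\<close> by (intro mult_left_mono) auto
  moreover have "c * c \<le> c * t"
    using \<open>c < t\<close> assms(1) by (intro mult_left_mono) auto
  moreover have "t * (2 * c) \<le> t * t"
    using t \<open>0 \<le> c / \<epsilon>\<close> \<open>0 < t\<close> by (intro mult_left_mono) auto
  ultimately have "c * (2 * l + t + c) \<le> t * (t - c)"
    by (simp add: algebra_simps)
  then show "0 < l \<and> c < t \<and> t + c \<le> l \<and> c * (2 * l + t + c) \<le> t * (t - c)"
    using \<open>0 < l\<close> \<open>c < t\<close> \<open>t \<le> l / 2\<close> t \<open>0 \<le> c / \<epsilon>\<close> by simp
qed

lemma lattice_endpoints_at_scale: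
  fixes x y :: "real^'n"
  defines "c \<equiv> real CARD('n)"
  assumes xy: "x \<in> cball 0 (2*l)" "y \<in> cball 0 (2*l)" "x \<noteq> y" "dist x y \<le> l'"
    and l': "l' \<le> 2*l"
    and scale: "c < \<epsilon> * l" "\<epsilon> * l + c \<le> l" "c * (2 * l + \<epsilon> * l + c) \<le> \<epsilon> * l * (\<epsilon> * l - c)"
  shows "\<exists>xh yh. xh \<in> cball 0 (3*l) \<and> lattice_pt xh \<and> yh \<in> cball 0 (3*l) \<and> lattice_pt yh \<and>
    dist xh yh \<ge> dist x y \<and>
    (\<forall>p\<in>Paths1 x y l'. \<exists>q\<in>Paths1 xh yh (l' + 8*\<epsilon>*l). sublist p q) \<and>
    (\<forall>\<xi>\<in>AnimalsStar1 x y l'. \<exists>\<eta>\<in>AnimalsStar1 xh yh (l' + 8*\<epsilon>*l). animal_sub \<xi> \<eta>)"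
proof -
  define t m where "t = \<epsilon> * l" and "m = l' + 8*\<epsilon>*l"
  define xh yh where "xh = outer_lattice_pt x y t" and "yh = outer_lattice_pt y x t"
  interpret outward_extension x y xh yh t c
    unfolding xh_def yh_def c_def t_def
    using xy(3) scale(1) by (intro outward_extension_outer_lattice_pt) (simp_all add: c_def)
  have "c < t"
    using scale(1) by (simp add: t_def)
  have big: "c * (l' + t + c) \<le> t * (t - c)"
    using l' scale(3) c_nonneg mult_left_mono[of l' "2 * l" c] by (simp add: t_def algebra_simps)
  have budget: "l' + 2 * (t + c) \<le> m"
    using \<open>c < t\<close> c_nonneg by (simp add: t_def m_def)
  have "norm xh \<le> 3 * l" "norm yh \<le> 3 * l"
    using xy(1,2) scale(2) dist_le outward_extension.dist_le[OF reverse]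
      norm_triangle_ineq[of x "xh - x"] norm_triangle_ineq[of y "yh - y"]
    by (simp_all add: t_def dist_norm norm_minus_commute)
  then have "xh \<in> cball 0 (3*l)" "yh \<in> cball 0 (3*l)"
    by simp_all
  moreover have "\<forall>p\<in>Paths1 x y l'. \<exists>q\<in>Paths1 xh yh m. sublist p q"
  proof
    fix p
    assume "p \<in> Paths1 x y l'"
    then have "xh # p @ [yh] \<in> Paths1 xh yh m"
      by (rule Paths1_extend[OF _ big budget])
    moreover have "sublist p (xh # p @ [yh])"
      using sublist_appendI[of p "[xh]" "[yh]"] by simp
    ultimately show "\<exists>q\<in>Paths1 xh yh m. sublist p q"
      by blast
  qed
  moreover have "\<forall>\<xi>\<in>AnimalsStar1 x y l'. \<exists>\<eta>\<in>AnimalsStar1 xh yh m. animal_sub \<xi> \<eta>"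
  proof
    fix \<xi>
    assume "\<xi> \<in> AnimalsStar1 x y l'"
    then obtain \<eta> where "\<eta> \<in> AnimalsStar1 xh yh m" "animal_sub \<xi> \<eta>"
      by (rule AnimalsStar1_extend[OF _ \<open>c < t\<close> big budget])
    then show "\<exists>\<eta>\<in>AnimalsStar1 xh yh m. animal_sub \<xi> \<eta>"
      by blast
  qed
  moreover have "lattice_pt xh" "lattice_pt yh"
    by (simp_all add: xh_def yh_def outer_lattice_pt_def lattice_pt_round_vec)
  ultimately show ?thesis
    using dist_le_dist by (intro exI[of _ xh] exI[of _ yh]) (simp add: m_def)
qed

lemma eventually_lattice_endpoints:
  fixes \<epsilon> :: real
  assumes "0 < \<epsilon>" "\<epsilon> < 1/8"
  shows "\<forall>\<^sub>F l in at_top. l > 0 \<and>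
    (\<forall>(x::real^'n) y l'. x \<in> cball 0 (2*l) \<and> y \<in> cball 0 (2*l) \<and> x \<noteq> y \<and>
        dist x y \<le> l' \<and> l' \<le> 2*l \<longrightarrow>
      (\<exists>xh yh. xh \<in> cball 0 (3*l) \<and> lattice_pt xh \<and> yh \<in> cball 0 (3*l) \<and> lattice_pt yh \<and>
        dist xh yh \<ge> dist x y \<and>
        (\<forall>p\<in>Paths1 x y l'. \<exists>q\<in>Paths1 xh yh (l' + 8*\<epsilon>*l). sublist p q) \<and>
        (\<forall>\<xi>\<in>AnimalsStar1 x y l'. \<exists>\<eta>\<in>AnimalsStar1 xh yh (l' + 8*\<epsilon>*l). animal_sub \<xi> \<eta>)))"
proof -
  have "0 \<le> real CARD('n)" "\<epsilon> \<le> 1/2"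
    using assms by simp_all
  from eventually_large_scale[OF this(1) assms(1) this(2)] show ?thesis
    by (rule eventually_mono) (safe; (rule lattice_endpoints_at_scale)?; assumption)
qed

theorem lemma5p8:
  assumes "CARD('n) \<ge> 2"
  shows
   "(\<forall>\<epsilon>::real. 0 < \<epsilon> \<and> \<epsilon> < 1/8 \<longrightarrow>
      (\<forall>\<^sub>F l in at_top. l > 0 \<and>
        (\<forall>(x::real^'n) y l'. x \<in> cball 0 (2*l) \<and> y \<in> cball 0 (2*l) \<and> x \<noteq> y \<and>
             dist x y \<le> l' \<and> l' \<le> 2*l \<longrightarrow>
           (\<exists>xh yh. xh \<in> cball 0 (3*l) \<and> lattice_pt xh \<and> yh \<in> cball 0 (3*l) \<and> lattice_pt yh \<and>
              dist xh yh \<ge> dist x y \<and>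
              (\<forall>p\<in>Paths1 x y l'. \<exists>q\<in>Paths1 xh yh (l' + 8*\<epsilon>*l). sublist p q)))))
    \<and>
    (\<forall>\<epsilon>::real. 0 < \<epsilon> \<and> \<epsilon> < 1/8 \<longrightarrow>
      (\<forall>\<^sub>F l in at_top. l > 0 \<and>
        (\<forall>(x::real^'n) y l'. x \<in> cball 0 (2*l) \<and> y \<in> cball 0 (2*l) \<and> x \<noteq> y \<and>
             dist x y \<le> l' \<and> l' \<le> 2*l \<longrightarrow>
           (\<exists>xh yh. xh \<in> cball 0 (3*l) \<and> lattice_pt xh \<and> yh \<in> cball 0 (3*l) \<and> lattice_pt yh \<and>
              dist xh yh \<ge> dist x y \<and>
              (\<forall>\<xi>\<in>AnimalsStar1 x y l'. \<exists>\<eta>\<in>AnimalsStar1 xh yh (l' + 8*\<epsilon>*l). animal_sub \<xi> \<eta>)))))"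
  by (intro conjI allI impI; elim conjE; drule (1) eventually_lattice_endpoints[where 'n = 'n];
      erule eventually_mono; meson)

end
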